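(* Let $Q_{\mathsf{matrix}}(A,C) :- R_1(A,B), R_2(B,C)$ and let $D=(R_1,R_2)$ be any database with $R_2=(\pi_B R_2)\times(\pi_C R_2)$. Then there is a solution to $\mathrm{SWP}(Q_{\mathsf{matrix}},D)$ that is integral, i.e. there is a sub-database $(R_1',R_2')$ with $R_1'\subseteq R_1$, $R_2'\subseteq R_2$, $R_2'=(\pi_B R_2')\times(\pi_C R_2)$, such that $Q_{\mathsf{matrix}}(R_1',R_2')=Q_{\mathsf{matrix}}(D)$ and $|R_1'|+|R_2'|$ is minimum among all sub-databases $D''\subseteq D$ with $Q_{\mathsf{matrix}}(D'')=Q_{\mathsf{matrix}}(D)$.
   Context: For a conjunctive query $Q$ and database $D$ (finite sets of tuples for its relations), $Q(D)$ is the projection onto the output attributes of the natural join of the relations. $\mathrm{SWP}(Q,D)$ asks for a subset $D'\subseteq D$ of tuples with $Q(D')=Q(D)$ and $|D'|$ minimum. $\pi$ denotes projection. *)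

theory Defs
  imports Main
begin

definition qmatrix :: "('a \<times> 'b) set \<Rightarrow> ('b \<times> 'c) set \<Rightarrow> ('a \<times> 'c) set" where
  "qmatrix R1 R2 = {(a, c). \<exists>b. (a, b) \<in> R1 \<and> (b, c) \<in> R2}"

definition projB :: "('b \<times> 'c) set \<Rightarrow> 'b set" where
  "projB R = fst ` R"

definition projC :: "('b \<times> 'c) set \<Rightarrow> 'c set" where
  "projC R = snd ` R"

end

theory Submission
  imports Defs
begin

text \<open>Write \<open>R\<^sub>2 = B \<times> C\<close> and \<open>A = R\<^sub>1\<inverse> `` B\<close>, so that the query answer is \<open>A \<times> C\<close>.
Any feasible \<open>(S\<^sub>1, S\<^sub>2)\<close> must contain an \<open>S\<^sub>1\<close>-edge out of every \<open>a \<in> A\<close>, and for every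
column \<open>c \<in> C\<close> the \<open>B\<close>-values paired with \<open>c\<close> in \<open>S\<^sub>2\<close> must cover \<open>A\<close> through \<open>R\<^sub>1\<close>.
Hence the cost is at least \<open>|A| + |C| \<cdot> \<tau>\<close>, where \<open>\<tau>\<close> is the least size of a \<open>B' \<subseteq> B\<close>
with \<open>A \<subseteq> R\<^sub>1\<inverse> `` B'\<close>. This bound is attained by the rectangle \<open>B' \<times> C\<close> together with
one \<open>R\<^sub>1\<close>-edge from each \<open>a \<in> A\<close> into a minimum cover \<open>B'\<close>.\<close>

lemma qmatrix_eq_relcomp: "qmatrix R S = R O S"
  by (auto simp: qmatrix_def)

lemma relcomp_Times: "R O (B \<times> C) = (R\<inverse> `` B) \<times> C"
  by blast

lemma card_eq_sum_card_Image:
  assumes "finite R" "finite A" "Domain R \<subseteq> A"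
  shows "card R = (\<Sum>a\<in>A. card (R `` {a}))"
proof -
  have "R = (SIGMA a:A. R `` {a})"
    using assms(3) by auto
  then show ?thesis
    using assms(1,2) by (metis card_SigmaI finite_Image)
qed

lemma obtain_functional_subrelation:
  assumes "A \<subseteq> R\<inverse> `` X"
  obtains R' where "R' \<subseteq> R \<inter> A \<times> X" "Domain R' = A" "card R' = card A"
proof -
  have "\<forall>a\<in>A. \<exists>b. b \<in> X \<and> (a, b) \<in> R"
    using assms by blast
  then obtain f where f: "\<forall>a\<in>A. f a \<in> X \<and> (a, f a) \<in> R"
    by metis
  let ?R' = "(\<lambda>a. (a, f a)) ` A"
  have "card ?R' = card A"
    by (rule card_image) (auto intro: inj_onI)
  with f show thesis
    by (intro that[of ?R']) auto
qed

lemma obtain_min_card_cover: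
  assumes "A \<subseteq> R\<inverse> `` B"
  obtains X where "X \<subseteq> B" "A \<subseteq> R\<inverse> `` X"
    and "\<And>Y. Y \<subseteq> B \<Longrightarrow> A \<subseteq> R\<inverse> `` Y \<Longrightarrow> card X \<le> card Y"
proof -
  let ?P = "\<lambda>X. X \<subseteq> B \<and> A \<subseteq> R\<inverse> `` X"
  have "?P B"
    using assms by simp
  then obtain X where X: "?P X" and min: "\<And>Y. ?P Y \<Longrightarrow> card X \<le> card Y"
    using ex_has_least_nat[of ?P B card] by metis
  show thesis
    by (rule that[of X]) (use X min in auto)
qed

lemma card_Domain_le: "finite R \<Longrightarrow> card (Domain R) \<le> card R"
  unfolding Domain_fst by (rule card_image_le)

text \<open>Each column \<open>c\<close> of \<open>T\<close> must on its own cover \<open>A\<close>, so it costs at least \<open>k\<close> tuples.\<close>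

lemma card_mult_cover_bound_le:
  assumes "finite T" "finite C" "T \<subseteq> B \<times> C" "A \<times> C \<subseteq> S O T"
    and cover_bound: "\<And>X. X \<subseteq> B \<Longrightarrow> A \<subseteq> S\<inverse> `` X \<Longrightarrow> k \<le> card X"
  shows "card C * k \<le> card T"
proof -
  have "k \<le> card (T\<inverse> `` {c})" if "c \<in> C" for c
  proof (rule cover_bound)
    show "T\<inverse> `` {c} \<subseteq> B"
      using assms(3) by blast
    show "A \<subseteq> S\<inverse> `` (T\<inverse> `` {c})"
      using assms(4) \<open>c \<in> C\<close> by blast
  qed
  then have "card C * k \<le> (\<Sum>c\<in>C. card (T\<inverse> `` {c}))"
    using sum_mono[of C "\<lambda>_. k"] by simp
  also have "\<dots> = card T"
  proof -
    have "Domain (T\<inverse>) \<subseteq> C"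
      using assms(3) by blast
    then show ?thesis
      using assms(1,2) card_eq_sum_card_Image[of "T\<inverse>" C] by simp
  qed
  finally show ?thesis .
qed

lemma relcomp_eq_Times_card_lower_bound:
  assumes "finite S" "finite T" "finite C" "S \<subseteq> R" "T \<subseteq> B \<times> C"
    and "S O T = A \<times> C" "C = {} \<Longrightarrow> A = {}"
    and cover_bound: "\<And>X. X \<subseteq> B \<Longrightarrow> A \<subseteq> R\<inverse> `` X \<Longrightarrow> k \<le> card X"
  shows "card A + card C * k \<le> card S + card T"
proof -
  have "A \<subseteq> Domain S"
    using assms(6,7) by blast
  then have "card A \<le> card (Domain S)"
    using assms(1) by (simp add: card_mono finite_Domain)
  also have "\<dots> \<le> card S"
    using assms(1) by (rule card_Domain_le)
  finally have "card A \<le> card S" .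
  moreover have "card C * k \<le> card T"
  proof (rule card_mult_cover_bound_le[where S = S and A = A, OF assms(2,3,5)])
    show "A \<times> C \<subseteq> S O T"
      by (simp add: assms(6))
    show "k \<le> card X" if "X \<subseteq> B" "A \<subseteq> S\<inverse> `` X" for X
      using cover_bound[OF that(1)] that(2) \<open>S \<subseteq> R\<close> by blast
  qed
  ultimately show ?thesis
    by simp
qed

theorem lemma21:
  fixes R1 :: "('a \<times> 'b) set" and R2 :: "('b \<times> 'c) set"
  assumes "finite R1" and "finite R2"
    and "R2 = projB R2 \<times> projC R2"
  shows "\<exists>R1' R2'. R1' \<subseteq> R1 \<and> R2' \<subseteq> R2
           \<and> R2' = projB R2' \<times> projC R2
           \<and> qmatrix R1' R2' = qmatrix R1 R2
           \<and> (\<forall>S1 S2. S1 \<subseteq> R1 \<longrightarrow> S2 \<subseteq> R2 \<longrightarrow> qmatrix S1 S2 = qmatrix R1 R2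
                \<longrightarrow> card R1' + card R2' \<le> card S1 + card S2)"
proof -
  define B C where "B = Domain R2" and "C = Range R2"
  define A where "A = R1\<inverse> `` B"
  have R2: "R2 = B \<times> C"
    using assms(3) by (simp add: B_def C_def projB_def projC_def Domain_fst Range_snd)
  have query: "qmatrix R1 R2 = A \<times> C"
    by (simp add: qmatrix_eq_relcomp R2 relcomp_Times A_def)
  have A_empty: "C = {} \<Longrightarrow> A = {}"
    by (auto simp: A_def B_def C_def)
  have "finite C"
    using assms(2) by (simp add: C_def finite_Range)
  obtain B' where B': "B' \<subseteq> B" "A \<subseteq> R1\<inverse> `` B'"
    and B'_min: "\<And>X. X \<subseteq> B \<Longrightarrow> A \<subseteq> R1\<inverse> `` X \<Longrightarrow> card B' \<le> card X"
    by (rule obtain_min_card_cover[of A R1 B]) (simp_all add: A_def)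
  obtain R1' where R1': "R1' \<subseteq> R1 \<inter> A \<times> B'" "Domain R1' = A" "card R1' = card A"
    using obtain_functional_subrelation[OF B'(2)] by blast
  have optimal: "card R1' + card (B' \<times> C) \<le> card S1 + card S2"
    if "S1 \<subseteq> R1" "S2 \<subseteq> R2" "qmatrix S1 S2 = qmatrix R1 R2" for S1 S2
  proof -
    have answer: "S1 O S2 = A \<times> C"
      using that(3) query by (metis qmatrix_eq_relcomp)
    have "card A + card C * card B' \<le> card S1 + card S2"
      using finite_subset[OF that(1) assms(1)] finite_subset[OF that(2) assms(2)] \<open>finite C\<close>
        that(1) that(2)[unfolded R2] answer A_empty B'_min
      by (rule relcomp_eq_Times_card_lower_bound)
    then show ?thesis
      using R1'(3) by (simp add: card_cartesian_product mult.commute)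
  qed
  have "R1'\<inverse> `` B' = A"
    using R1'(1,2) by blast
  then have "qmatrix R1' (B' \<times> C) = qmatrix R1 R2"
    unfolding query by (simp add: qmatrix_eq_relcomp relcomp_Times)
  moreover have "B' \<times> C \<subseteq> R2"
    using B'(1) R2 by blast
  moreover have "B' \<times> C = projB (B' \<times> C) \<times> projC R2"
    by (auto simp: projB_def projC_def C_def Range_snd)
  ultimately show ?thesis
    using R1'(1) optimal by (intro exI[of _ R1'] exI[of _ "B' \<times> C"]) blast
qed

end
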